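(* Let $\{\Theta(k)\}_{k=0}^{\infty}$ be a bounded sequence of complex numbers, and let $\upsilon\in\mathbb{C}$ with $\operatorname{Re}(\upsilon)>0$, $c>0$, $y>0$, and $\lambda,b$ real with $\lambda b>0$ (i.e. $\lambda>0,b>0$ or $\lambda<0,b<0$). Define $$\mathbf{I}^{*}_{C}(\upsilon,b,c,\lambda,y)=\sum_{k=0}^{\infty}\left[\frac{\Theta(k)}{k!}\int_{0}^{\infty}x^{\upsilon-1}e^{-(\lambda b+ck)\sqrt{x}}\cos(xy)\,dx\right].$$ Then $$\mathbf{I}^{*}_{C}(\upsilon,b,c,\lambda,y)=y^{-\upsilon}\sum_{k=0}^{\infty}\left[\frac{\Theta(k)}{k!}\sum_{\ell=0}^{\infty}\frac{(-1)^{\ell}(\lambda b+ck)^{\ell}\,\Gamma\!\left(\upsilon+\frac{\ell}{2}\right)}{y^{\ell/2}\,\ell!}\cos\!\left(\frac{\upsilon\pi}{2}+\frac{\ell\pi}{4}\right)\right],$$ and also $$\mathbf{I}^{*}_{C}(\upsilon,b,c,\lambda,y)=y^{-\upsilon}\sum_{k=0}^{\infty}\left[\frac{\Theta(k)}{k!}\sum_{j=0}^{3}\frac{(-1)^{j}(\lambda b+ck)^{j}\,\Gamma\!\left(\upsilon+\frac{j}{2}\right)}{y^{j/2}\,j!}\cos\!\left(\frac{\upsilon\pi}{2}+\frac{j\pi}{4}\right)\,F_j\!\left(-\frac{(\lambda b+ck)^{4}}{64y^{2}}\right)\right],$$ where $F_0(z)={}_{2}F_{3}\!\left(\tfrac{\upsilon}{2},\tfrac{\upsilon+1}{2};\tfrac14,\tfrac12,\tfrac34;z\right)$,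 $F_1(z)={}_{2}F_{3}\!\left(\tfrac{2\upsilon+1}{4},\tfrac{2\upsilon+3}{4};\tfrac12,\tfrac34,\tfrac54;z\right)$, $F_2(z)={}_{2}F_{3}\!\left(\tfrac{\upsilon+1}{2},\tfrac{\upsilon+2}{2};\tfrac34,\tfrac54,\tfrac32;z\right)$, $F_3(z)={}_{2}F_{3}\!\left(\tfrac{2\upsilon+3}{4},\tfrac{2\upsilon+5}{4};\tfrac54,\tfrac32,\tfrac74;z\right)$. (Note $\lambda b+ck=\lambda b\,\frac{((\lambda b+c)/c)_k}{(\lambda b/c)_k}$, which is the form in which the paper writes the argument.) *)

theory Defs
  imports "HOL-Analysis.Analysis"
begin

definition hyp2F3 :: "complex \<Rightarrow> complex \<Rightarrow> complex \<Rightarrow> complex \<Rightarrow> complex \<Rightarrow> complex \<Rightarrow> complex" where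
  "hyp2F3 a1 a2 b1 b2 b3 z =
     (\<Sum>n. pochhammer a1 n * pochhammer a2 n /
           (pochhammer b1 n * pochhammer b2 n * pochhammer b3 n * fact n) * z ^ n)"

definition Icos :: "complex \<Rightarrow> real \<Rightarrow> real \<Rightarrow> complex" where
  "Icos v a y = integral {0<..}
     (\<lambda>x::real. of_real x powr (v - 1) * of_real (exp (- a * sqrt x)) * of_real (cos (x * y)))"

end

theory Submission
  imports Defs "HOL-Complex_Analysis.Complex_Analysis"
begin

text \<open>Fix \<open>a = \<lambda>b + ck > 0\<close>. After damping the integrand by \<open>exp(-\<epsilon>x)\<close>, the power series
  of \<open>exp(-a\<surd>x)\<close> can be integrated termwise (dominated convergence), each term being a Laplace
  transform \<open>\<integral>\<^sub>0\<^sup>\<infinity> x\<^sup>s\<^sup>-\<^sup>1 exp(-wx) dx = \<Gamma>(s) w\<^sup>-\<^sup>s\<close> with \<open>w = \<epsilon> \<plusminus> iy\<close>; this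
  holds for real \<open>w > 0\<close> by scaling the Gamma integral and for \<open>Re w > 0\<close> by analytic continuation.
  The coefficients are bounded uniformly in \<open>\<epsilon> \<ge> 0\<close> by a summable majorant, so by Tannery's theorem
  one may let \<open>\<epsilon> \<rightarrow> 0\<close>, where \<open>(-iy)\<^sup>-\<^sup>s + (iy)\<^sup>-\<^sup>s = 2 y\<^sup>-\<^sup>s cos(s\<pi>/2)\<close>. The resulting series
  converges absolutely; grouping its terms by the residue of the index mod 4 and using the duplication
  formula for Pochhammer symbols turns each residue class into a \<open>\<^sub>2F\<^sub>3\<close> series. The outer series
  over \<open>k\<close> converges since \<open>\<Theta>\<close> is bounded and the integrals are bounded uniformly in \<open>k\<close>.\<close>

lemma sum_power_div_fact_le_exp:
  fixes u :: real
  assumes "0 \<le> u"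
  shows "(\<Sum>l<n. u ^ l / fact l) \<le> exp u"
proof -
  have s: "(\<lambda>l. u ^ l /\<^sub>R fact l) sums exp u" by (rule exp_converges)
  have "(\<Sum>l<n. u ^ l / fact l) = (\<Sum>l<n. u ^ l /\<^sub>R fact l)" by (simp add: divide_inverse_commute)
  also have "\<dots> \<le> (\<Sum>l. u ^ l /\<^sub>R fact l)"
    using s assms by (intro sum_le_suminf) (auto simp: sums_iff)
  also have "\<dots> = exp u" using s by (simp add: sums_iff)
  finally show ?thesis .
qed

lemma exp_neg_linear_mult_exp_sqrt_le:
  fixes a e x :: real
  assumes "e > 0" "x \<ge> 0"
  shows "exp (- (e * x)) * exp (a * sqrt x) \<le> exp (a\<^sup>2 / (2 * e)) * exp (- (e / 2 * x))"
proof -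
  have "2 * e * (a * sqrt x) \<le> a\<^sup>2 + e\<^sup>2 * x"
    using assms sum_squares_bound[of a "e * sqrt x"] by (simp add: power_mult_distrib algebra_simps)
  hence "a * sqrt x \<le> a\<^sup>2 / (2 * e) + e / 2 * x"
    using assms by (simp add: field_simps power2_eq_square)
  thus ?thesis by (simp flip: exp_add)
qed

lemma continuous_dominated_integrable:
  fixes f :: "real \<Rightarrow> 'a::euclidean_space"
  assumes "continuous_on S f" "S \<in> sets lebesgue" "h integrable_on S"
    and "\<And>x. x \<in> S \<Longrightarrow> norm (f x) \<le> h x"
  shows "f absolutely_integrable_on S" and "f integrable_on S"
proof -
  show *: "f absolutely_integrable_on S"
    using assms by (intro measurable_bounded_by_integrable_imp_absolutely_integrable
                          continuous_imp_measurable_on_sets_lebesgue)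
  show "f integrable_on S"
    using * by (simp add: absolutely_integrable_on_def)
qed

lemma powr_exp_integrable:
  fixes p r :: real
  assumes "p > -1" "r > 0"
  shows "(\<lambda>x. x powr p * exp (- (r * x))) integrable_on {0<..}"
proof -
  have "(\<lambda>t. complex_of_real t powr (of_real (p + 1) - 1) / of_real (exp (r * t)))
          absolutely_integrable_on {0<..}"
    using assms by (intro absolutely_integrable_Gamma_integral) auto
  hence "(\<lambda>t. norm (complex_of_real t powr (of_real (p + 1) - 1) / of_real (exp (r * t))))
          integrable_on {0<..}"
    by (simp add: absolutely_integrable_on_def)
  thus ?thesis
    by (rule integrable_eq) (auto simp: norm_divide norm_powr_real_powr exp_minus field_simps)
qed

lemma sqrt_power_eq_powr:
  assumes "x > 0"
  shows "sqrt x ^ l = x powr (real l / 2)"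
  using assms by (simp add: powr_half_sqrt[symmetric] powr_realpow[symmetric] powr_powr)

lemma of_real_powr_plus_half:
  assumes x: "x > 0"
  shows "(of_real x :: complex) powr (v + of_real (real l / 2) - 1) = of_real x powr (v - 1) * of_real (sqrt x ^ l)"
proof -
  have "(of_real x :: complex) powr (v + of_real (real l / 2) - 1) = of_real x powr ((v - 1) + of_real (real l / 2))"
    by (simp add: algebra_simps)
  also have "\<dots> = of_real x powr (v - 1) * of_real x powr (of_real (real l / 2))"
    by (rule powr_add)
  also have "(of_real x :: complex) powr (of_real (real l / 2)) = of_real (x powr (real l / 2))"
    using x by (intro powr_of_real) auto
  finally show ?thesis using x by (simp add: sqrt_power_eq_powr)
qed

lemma of_real_powr_eq_mult_powr_minus_one:
  assumes "x > 0"
  shows "(of_real x :: complex) powr s = of_real x * of_real x powr (s - 1)"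
proof -
  have "(of_real x :: complex) powr s = of_real x powr ((s - 1) + 1)" by simp
  also have "\<dots> = of_real x powr (s - 1) * of_real x powr 1" by (rule powr_add)
  finally show ?thesis using assms by simp
qed

lemma powr_exp_mult_exp_sqrt_sum_le:
  fixes a e r x :: real
  assumes a: "a \<ge> 0" and e: "e > 0" and x: "x > 0"
  shows "x powr r * exp (- (e * x)) * (\<Sum>l<n. (a * sqrt x) ^ l / fact l)
           \<le> exp (a\<^sup>2 / (2 * e)) * (x powr r * exp (- (e / 2 * x)))"
proof -
  have "x powr r * exp (- (e * x)) * (\<Sum>l<n. (a * sqrt x) ^ l / fact l)
      \<le> x powr r * (exp (- (e * x)) * exp (a * sqrt x))"
    using a x by (simp add: mult.assoc mult_left_mono sum_power_div_fact_le_exp)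
  also have "\<dots> \<le> x powr r * (exp (a\<^sup>2 / (2 * e)) * exp (- (e / 2 * x)))"
    using e x by (intro mult_left_mono exp_neg_linear_mult_exp_sqrt_le) auto
  finally show ?thesis by (simp add: mult_ac)
qed

lemma powr_exp_sqrt_integrable:
  fixes p a :: real
  assumes p: "p > -1" and a: "a > 0"
  shows "(\<lambda>x. x powr p * exp (- a * sqrt x)) integrable_on {0<..}"
proof -
  obtain k :: nat where k: "real k > p + 1" using reals_Archimedean2 by blast
  define C where "C = fact (2 * k) / a ^ (2 * k)"
  have cont: "continuous_on S (\<lambda>x. x powr p * exp (- a * sqrt x))" if "S \<subseteq> {0<..}" for S
    using that by (intro continuous_intros) auto
  have "(\<lambda>x. x powr p * exp (- a * sqrt x)) integrable_on {0<..1}"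
  proof (rule continuous_dominated_integrable(2)[OF cont])
    show "(\<lambda>x. x powr p) integrable_on {0<..1}" using p by (intro integrable_on_powr_from_0') auto
  qed (use a in \<open>auto simp: abs_mult intro!: mult_left_le\<close>)
  moreover have "(\<lambda>x. x powr p * exp (- a * sqrt x)) integrable_on {1..}"
  proof (rule continuous_dominated_integrable(2)[OF cont])
    show "(\<lambda>x. C * x powr (p - real k)) integrable_on {1..}"
      using has_integral_powr_to_inf[of "p - real k" 1] k
      by (intro integrable_on_mult_right) (auto simp: integrable_on_def)
  next
    fix x :: real assume "x \<in> {1..}"
    hence x: "x > 0" by auto
    have "(a * sqrt x) ^ (2 * k) / fact (2 * k) \<le> (\<Sum>l<Suc (2 * k). (a * sqrt x) ^ l / fact l)"
      using a x by (intro member_le_sum) auto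
    also have "\<dots> \<le> exp (a * sqrt x)"
      using a x by (intro sum_power_div_fact_le_exp) auto
    finally have "a ^ (2 * k) * x ^ k / fact (2 * k) \<le> exp (a * sqrt x)"
      using x by (simp add: power_mult_distrib power_mult)
    hence "exp (- a * sqrt x) \<le> C / x ^ k"
      using a x by (simp add: exp_minus C_def field_simps)
    hence "x powr p * exp (- a * sqrt x) \<le> x powr p * (C / x ^ k)"
      by (intro mult_left_mono) auto
    also have "\<dots> = C * x powr (p - real k)"
      using x by (simp add: powr_diff powr_realpow)
    finally show "norm (x powr p * exp (- a * sqrt x)) \<le> C * x powr (p - real k)"
      by simp
  qed auto
  ultimately show ?thesis
    by (rule integrable_Un') (auto intro: negligible_subset[of "{1}"])
qed

lemma sums_integral_dominated:
  fixes f :: "nat \<Rightarrow> real \<Rightarrow> 'a::euclidean_space"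
  assumes f: "\<And>l. (f l has_integral t l) S" and h: "h integrable_on S"
    and le: "\<And>n x. x \<in> S \<Longrightarrow> norm (\<Sum>l<n. f l x) \<le> h x"
    and sums: "\<And>x. x \<in> S \<Longrightarrow> (\<lambda>l. f l x) sums G x"
  shows "t sums integral S G"
proof -
  have "(\<lambda>n. integral S (\<lambda>x. \<Sum>l<n. f l x)) \<longlonglongrightarrow> integral S G"
    using f sums by (intro dominated_convergence(2)[OF _ h le])
                    (auto intro!: integrable_sum simp: sums_def integrable_on_def)
  moreover have "integral S (\<lambda>x. \<Sum>l<n. f l x) = (\<Sum>l<n. t l)" for n
    using f by (subst integral_sum) (auto simp: integrable_on_def intro!: sum.cong integral_unique)
  ultimately show ?thesis by (simp add: sums_def)
qed

section \<open>The Laplace transform of a power\<close>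

definition laplace_powr :: "complex \<Rightarrow> complex \<Rightarrow> complex" where
  "laplace_powr s w = integral {0<..} (\<lambda>x. of_real x powr (s - 1) * exp (- (w * of_real x)))"

lemma powr_exp_complex_integrable:
  fixes s w :: complex
  assumes "Re s > 0" "Re w > 0"
  shows "(\<lambda>x. of_real x powr (s - 1) * exp (- (w * of_real x))) absolutely_integrable_on {0<..}"
    and "(\<lambda>x. of_real x powr (s - 1) * exp (- (w * of_real x))) integrable_on {0<..}"
proof -
  have "continuous_on {0<..} (\<lambda>x. of_real x powr (s - 1) * exp (- (w * of_real x)))"
    by (intro continuous_intros) auto
  moreover have "(\<lambda>x. x powr (Re s - 1) * exp (- (Re w * x))) integrable_on {0<..}"
    using assms by (intro powr_exp_integrable) auto
  moreover have "norm (of_real x powr (s - 1) * exp (- (w * of_real x))) \<le> x powr (Re s - 1) * exp (- (Re w * x))"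
    if "x \<in> {0<..}" for x
    using that by (simp add: norm_mult norm_powr_real_powr)
  ultimately show "(\<lambda>x. of_real x powr (s - 1) * exp (- (w * of_real x))) absolutely_integrable_on {0<..}"
    and "(\<lambda>x. of_real x powr (s - 1) * exp (- (w * of_real x))) integrable_on {0<..}"
    by (auto intro: continuous_dominated_integrable)
qed

lemma norm_powr_exp_Taylor_remainder_le:
  fixes s w h :: complex and x :: real
  assumes x: "x > 0"
  shows "norm (of_real x powr (s - 1) * exp (- (w * of_real x)) * (exp (- (h * of_real x)) - (1 + - (h * of_real x))))
           \<le> norm h ^ 2 * x powr (Re s + 1) * exp (- ((Re w - norm h) * x))"
proof -
  have "norm (exp (- (h * of_real x)) - (1 + - (h * of_real x))) \<le> exp (norm h * x) * (norm h * x) ^ 2"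
    using Taylor_exp_field[of "- (h * of_real x)" 1] x by (simp add: norm_mult power2_eq_square)
  hence "norm (of_real x powr (s - 1) * exp (- (w * of_real x)) * (exp (- (h * of_real x)) - (1 + - (h * of_real x))))
      \<le> (x powr (Re s - 1) * exp (- (Re w * x))) * (exp (norm h * x) * (norm h * x) ^ 2)"
    unfolding norm_mult[of "_ * _"] using x
    by (intro mult_mono) (auto simp: norm_mult norm_powr_real_powr)
  also have "\<dots> = norm h ^ 2 * (x powr (Re s - 1) * x ^ 2) * (exp (- (Re w * x)) * exp (norm h * x))"
    by (simp add: power_mult_distrib mult_ac)
  also have "exp (- (Re w * x)) * exp (norm h * x) = exp (- ((Re w - norm h) * x))"
    by (subst exp_add[symmetric]) (simp add: algebra_simps)
  also have "x powr (Re s - 1) * x ^ 2 = x powr (Re s + 1)"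
  proof -
    have "x ^ 2 = x powr 2" using x by simp
    thus ?thesis by (simp add: powr_add[symmetric] add.commute)
  qed
  finally show ?thesis by (simp add: mult_ac)
qed

lemma laplace_powr_remainder_has_integral:
  fixes s u w :: complex
  assumes s: "Re s > 0" and w: "Re w > 0" and u: "Re u > 0"
  shows "((\<lambda>x. of_real x powr (s - 1) * exp (- (w * of_real x))
             * (exp (- ((u - w) * of_real x)) - (1 + - ((u - w) * of_real x))))
          has_integral laplace_powr s u - laplace_powr s w + (u - w) * laplace_powr (s + 1) w) {0<..}"
proof -
  define g where "g z x = of_real x powr (s - 1) * exp (- (z * of_real x))" for z x
  have g: "(g z has_integral laplace_powr s z) {0<..}" if "Re z > 0" for z
    unfolding g_def laplace_powr_def using powr_exp_complex_integrable(2)[OF s that] by (rule integrable_integral)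
  have "((\<lambda>x. of_real x powr (s + 1 - 1) * exp (- (w * of_real x))) has_integral laplace_powr (s + 1) w) {0<..}"
    unfolding laplace_powr_def using s w by (intro integrable_integral powr_exp_complex_integrable(2)) auto
  hence xg: "((\<lambda>x. of_real x * g w x) has_integral laplace_powr (s + 1) w) {0<..}"
    by (rule has_integral_eq[rotated]) (simp add: g_def of_real_powr_eq_mult_powr_minus_one[of _ s])
  have "((\<lambda>x. g u x - g w x + (u - w) * (of_real x * g w x))
          has_integral laplace_powr s u - laplace_powr s w + (u - w) * laplace_powr (s + 1) w) {0<..}"
    by (intro has_integral_add has_integral_diff has_integral_mult_right g xg u w)
  thus ?thesis
    by (rule has_integral_eq[rotated]) (simp add: g_def algebra_simps flip: exp_add)
qed

lemma laplace_powr_remainder_le: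
  fixes s u w :: complex
  assumes s: "Re s > 0" and w: "Re w > 0" and u: "norm (u - w) < Re w / 2"
  shows "norm (laplace_powr s u - laplace_powr s w + (u - w) * laplace_powr (s + 1) w)
           \<le> norm (u - w) ^ 2 * integral {0<..} (\<lambda>x. x powr (Re s + 1) * exp (- (Re w / 2 * x)))"
proof -
  define h where "h = u - w"
  define R where "R x = of_real x powr (s - 1) * exp (- (w * of_real x))
      * (exp (- (h * of_real x)) - (1 + - (h * of_real x)))" for x
  have "Re (w - u) \<le> norm (u - w)"
    using complex_Re_le_cmod[of "w - u"] by (simp add: norm_minus_commute)
  hence "Re u > 0" using u w by simp
  hence R: "(R has_integral laplace_powr s u - laplace_powr s w + h * laplace_powr (s + 1) w) {0<..}"
    unfolding R_def h_def by (rule laplace_powr_remainder_has_integral[OF s w])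
  have "norm (integral {0<..} R)
      \<le> integral {0<..} (\<lambda>x. norm h ^ 2 * (x powr (Re s + 1) * exp (- (Re w / 2 * x))))"
  proof (rule integral_norm_bound_integral)
    show "R integrable_on {0<..}" using R by blast
    show "(\<lambda>x. norm h ^ 2 * (x powr (Re s + 1) * exp (- (Re w / 2 * x)))) integrable_on {0<..}"
      using s w by (intro integrable_on_mult_right powr_exp_integrable) auto
  next
    fix x :: real assume "x \<in> {0<..}"
    hence x: "x > 0" by simp
    have "norm (R x) \<le> norm h ^ 2 * x powr (Re s + 1) * exp (- ((Re w - norm h) * x))"
      unfolding R_def using x by (rule norm_powr_exp_Taylor_remainder_le)
    also have "\<dots> \<le> norm h ^ 2 * x powr (Re s + 1) * exp (- (Re w / 2 * x))"
      using x u by (intro mult_left_mono) (auto simp: h_def)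
    finally show "norm (R x) \<le> norm h ^ 2 * (x powr (Re s + 1) * exp (- (Re w / 2 * x)))"
      by (simp add: mult_ac)
  qed
  thus ?thesis using R by (simp add: integral_unique h_def)
qed

lemma laplace_powr_has_field_derivative:
  assumes s: "Re s > 0" and w: "Re w > 0"
  shows "(laplace_powr s has_field_derivative - laplace_powr (s + 1) w) (at w)"
proof -
  define L where "L = laplace_powr s"
  define D where "D = - laplace_powr (s + 1) w"
  define C where "C = integral {0<..} (\<lambda>x. x powr (Re s + 1) * exp (- (Re w / 2 * x)))"
  have "norm ((L u - L w) / (u - w) - D) \<le> norm (u - w) * C"
    if "u \<noteq> w" "norm (u - w) < Re w / 2" for u
  proof -
    have "(L u - L w) / (u - w) - D = (L u - L w + (u - w) * laplace_powr (s + 1) w) / (u - w)"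
      using that by (simp add: D_def field_simps)
    also have "norm \<dots> \<le> norm (u - w) ^ 2 * C / norm (u - w)"
      unfolding norm_divide L_def C_def using that
      by (intro divide_right_mono laplace_powr_remainder_le s w) auto
    finally show ?thesis using that by (simp add: power2_eq_square)
  qed
  hence "eventually (\<lambda>u. norm ((L u - L w) / (u - w) - D) \<le> norm (u - w) * C) (at w)"
    unfolding eventually_at using w by (intro exI[of _ "Re w / 2"]) (auto simp: dist_norm)
  moreover have "((\<lambda>u. norm (u - w) * C) \<longlongrightarrow> 0) (at w)"
    by (rule tendsto_eq_intros refl | simp)+
  ultimately have "((\<lambda>u. (L u - L w) / (u - w) - D) \<longlongrightarrow> 0) (at w)"
    by (rule Lim_null_comparison)
  thus ?thesis
    unfolding D_def[symmetric] L_def[symmetric] has_field_derivative_iff Lim_null[of _ D] .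
qed

lemma laplace_powr_holomorphic:
  assumes "Re s > 0"
  shows "laplace_powr s holomorphic_on {w. Re w > 0}"
  using laplace_powr_has_field_derivative[OF assms]
  by (auto simp: holomorphic_on_def field_differentiable_def intro: has_field_derivative_at_within)

lemma laplace_powr_of_real:
  assumes s: "Re s > 0" and w: "w > 0"
  shows "laplace_powr s (of_real w) = Gamma s * of_real w powr (- s)"
proof -
  define f where "f = (\<lambda>t::real. complex_of_real t powr (s - 1) / of_real (exp t))"
  define g where "g = (\<lambda>x::real. complex_of_real x powr (s - 1) * exp (- (of_real w * of_real x)))"
  have fi: "f absolutely_integrable_on {0<..}"
    unfolding f_def by (rule absolutely_integrable_Gamma_integral'[OF s])
  have gi: "g absolutely_integrable_on {0<..}"
    unfolding g_def using powr_exp_complex_integrable(1)[OF s, of "of_real w"] w by simp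
  have "Gamma s = (\<integral>x. indicator {0<..} x *\<^sub>R f x \<partial>lebesgue)"
    using Gamma_integral_complex'[OF s] set_lebesgue_integral_eq_integral(2)[OF fi]
    by (simp add: f_def integral_unique set_lebesgue_integral_def)
  also have "\<dots> = \<bar>w\<bar> *\<^sub>R (\<integral>x. indicator {0<..} (0 + w * x) *\<^sub>R f (0 + w * x) \<partial>lebesgue)"
    using w by (intro lebesgue_integral_real_affine) auto
  also have "(\<lambda>x. indicator {0<..} (0 + w * x) *\<^sub>R f (0 + w * x))
      = (\<lambda>x. of_real w powr (s - 1) * (indicator {0<..} x *\<^sub>R g x))"
  proof
    fix x :: real
    show "indicator {0<..} (0 + w * x) *\<^sub>R f (0 + w * x) = of_real w powr (s - 1) * (indicator {0<..} x *\<^sub>R g x)"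
    proof (cases "x > 0")
      case True
      have "complex_of_real (w * x) powr (s - 1) = of_real w powr (s - 1) * of_real x powr (s - 1)"
        using w True by (simp add: powr_times_real)
      moreover have "inverse (complex_of_real (exp (w * x))) = exp (- (of_real w * of_real x))"
        by (simp add: exp_minus flip: exp_of_real)
      ultimately show ?thesis using True w
        by (simp add: f_def g_def indicator_def divide_inverse mult_ac zero_less_mult_iff)
    qed (use w in \<open>simp add: indicator_def zero_less_mult_iff\<close>)
  qed
  also have "(\<integral>x. of_real w powr (s - 1) * (indicator {0<..} x *\<^sub>R g x) \<partial>lebesgue)
      = of_real w powr (s - 1) * laplace_powr s (of_real w)"
    using set_lebesgue_integral_eq_integral(2)[OF gi]
    by (subst integral_mult_right_zero) (simp add: set_lebesgue_integral_def laplace_powr_def g_def)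
  finally have "Gamma s = (of_real w * of_real w powr (s - 1)) * laplace_powr s (of_real w)"
    using w by (simp add: scaleR_conv_of_real mult_ac)
  also have "of_real w * of_real w powr (s - 1) = (of_real w :: complex) powr s"
    using of_real_powr_eq_mult_powr_minus_one[OF w, of s] by simp
  finally show ?thesis
    using w by (simp add: powr_minus field_simps)
qed

lemma laplace_powr_eq:
  assumes s: "Re s > 0" and w: "Re w > 0"
  shows "laplace_powr s w = Gamma s * w powr (- s)"
proof -
  define S where "S = {w::complex. Re w > 0}"
  define f where "f = (\<lambda>w. laplace_powr s w - Gamma s * w powr (- s))"
  have "(\<lambda>w. Gamma s * w powr (- s)) holomorphic_on S"
    by (intro holomorphic_intros) (auto simp: S_def nonpos_Reals_def)
  hence "f holomorphic_on S"
    unfolding f_def using laplace_powr_holomorphic[OF s] by (simp add: S_def holomorphic_on_diff)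
  moreover have "open S" "connected S"
    unfolding S_def by (auto intro: open_halfspace_Re_gt convex_connected convex_halfspace_Re_gt)
  moreover have "of_real ` {0<..} \<subseteq> S" "1 \<in> S"
    by (auto simp: S_def)
  moreover have "(1::complex) islimpt of_real ` {0<..}"
    unfolding islimpt_approachable
  proof (intro allI impI bexI conjI)
    fix e :: real assume e: "e > 0"
    show "complex_of_real (1 + e / 2) \<in> of_real ` {0<..}"
      using e by (intro imageI) simp
    show "complex_of_real (1 + e / 2) \<noteq> 1"
      using e by (subst of_real_eq_1_iff) simp
    have "dist (complex_of_real (1 + e / 2)) 1 = dist (1 + e / 2) (1::real)"
      by (metis dist_of_real of_real_1)
    thus "dist (complex_of_real (1 + e / 2)) 1 < e"
      using e by (simp add: dist_real_def)
  qed
  moreover have "f z = 0" if "z \<in> of_real ` {0<..}" for z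
    using that laplace_powr_of_real[OF s] by (auto simp: f_def)
  moreover have "w \<in> S" using w by (simp add: S_def)
  ultimately have "f w = 0" by (rule analytic_continuation)
  thus ?thesis by (simp add: f_def)
qed

lemma has_integral_powr_exp_complex:
  assumes "Re s > 0" "Re w > 0"
  shows "((\<lambda>x. of_real x powr (s - 1) * exp (- (w * of_real x))) has_integral Gamma s * w powr (- s)) {0<..}"
  using integrable_integral[OF powr_exp_complex_integrable(2)[OF assms]] laplace_powr_eq[OF assms]
  by (simp add: laplace_powr_def)

lemma has_integral_powr_exp_cos:
  fixes s :: complex and e y :: real
  assumes s: "Re s > 0" and e: "e > 0"
  shows "((\<lambda>x. of_real x powr (s - 1) * of_real (exp (- (e * x))) * of_real (cos (x * y))) has_integral
          Gamma s * (((of_real e - \<i> * of_real y) powr (- s) + (of_real e + \<i> * of_real y) powr (- s)) / 2))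
         {0<..}"
proof -
  define w1 where "w1 = of_real e - \<i> * of_real y"
  define w2 where "w2 = of_real e + \<i> * of_real y"
  have "((\<lambda>x. (of_real x powr (s - 1) * exp (- (w1 * of_real x)) + of_real x powr (s - 1) * exp (- (w2 * of_real x))) / 2)
        has_integral (Gamma s * w1 powr (- s) + Gamma s * w2 powr (- s)) / 2) {0<..}"
    using s e by (intro has_integral_divide has_integral_add has_integral_powr_exp_complex)
                 (auto simp: w1_def w2_def)
  hence "((\<lambda>x. (of_real x powr (s - 1) * exp (- (w1 * of_real x)) + of_real x powr (s - 1) * exp (- (w2 * of_real x))) / 2)
        has_integral Gamma s * (((of_real e - \<i> * of_real y) powr (- s) + (of_real e + \<i> * of_real y) powr (- s)) / 2))
        {0<..}"
    by (simp add: w1_def w2_def algebra_simps)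
  thus ?thesis
  proof (rule has_integral_eq[rotated])
    fix x :: real
    have w1: "- (w1 * of_real x) = of_real (- (e * x)) + \<i> * of_real (x * y)"
      and w2: "- (w2 * of_real x) = of_real (- (e * x)) + - (\<i> * of_real (x * y))"
      by (simp_all add: w1_def w2_def algebra_simps)
    have c: "complex_of_real (cos (x * y)) = (exp (\<i> * of_real (x * y)) + exp (- (\<i> * of_real (x * y)))) / 2"
      by (simp add: cos_exp_eq flip: cos_of_real)
    show "(of_real x powr (s - 1) * exp (- (w1 * of_real x)) + of_real x powr (s - 1) * exp (- (w2 * of_real x))) / 2
        = of_real x powr (s - 1) * of_real (exp (- (e * x))) * of_real (cos (x * y))"
      unfolding w1 w2 exp_add exp_of_real c by (simp add: algebra_simps)
  qed
qed

section \<open>The damped integral as a power series\<close>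

definition Icos_damped :: "complex \<Rightarrow> real \<Rightarrow> real \<Rightarrow> real \<Rightarrow> complex" where
  "Icos_damped v a y e = integral {0<..} (\<lambda>x. of_real x powr (v - 1) * of_real (exp (- a * sqrt x))
      * of_real (exp (- (e * x))) * of_real (cos (x * y)))"

text \<open>The two powers come from \<open>cos(xy) = (e\<^sup>i\<^sup>x\<^sup>y + e\<^sup>-\<^sup>i\<^sup>x\<^sup>y)/2\<close>, which turns the integral of
  \<open>x\<^sup>s\<^sup>-\<^sup>1 e\<^sup>-\<^sup>\<epsilon>\<^sup>x cos(xy)\<close>, with \<open>s = v + l/2\<close>, into two Laplace transforms.\<close>

definition Icos_damped_coeff :: "complex \<Rightarrow> real \<Rightarrow> real \<Rightarrow> real \<Rightarrow> nat \<Rightarrow> complex" where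
  "Icos_damped_coeff v a y e l = of_real ((- a) ^ l / fact l) * (Gamma (v + of_real (real l / 2)) *
     (((of_real e - \<i> * of_real y) powr (- (v + of_real (real l / 2)))
      + (of_real e + \<i> * of_real y) powr (- (v + of_real (real l / 2)))) / 2))"

lemma has_integral_Icos_damped_term:
  assumes v: "Re v > 0" and e: "e > 0"
  shows "((\<lambda>x. of_real ((- a * sqrt x) ^ l / fact l) * (of_real x powr (v - 1) * of_real (exp (- (e * x)))
            * of_real (cos (x * y)))) has_integral Icos_damped_coeff v a y e l) {0<..}"
proof -
  have "((\<lambda>x. of_real ((- a) ^ l / fact l) * (of_real x powr (v + of_real (real l / 2) - 1)
          * of_real (exp (- (e * x))) * of_real (cos (x * y)))) has_integral Icos_damped_coeff v a y e l) {0<..}"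
    unfolding Icos_damped_coeff_def using v e by (intro has_integral_mult_right has_integral_powr_exp_cos) auto
  thus ?thesis
  proof (rule has_integral_eq[rotated])
    fix x :: real assume "x \<in> {0<..}"
    hence x: "x > 0" by simp
    have r: "(- a * sqrt x) ^ l / fact l = (- a) ^ l / fact l * sqrt x ^ l"
      by (simp add: power_mult_distrib[symmetric] del: power_mult_distrib)
    show "of_real ((- a) ^ l / fact l) * (of_real x powr (v + of_real (real l / 2) - 1)
          * of_real (exp (- (e * x))) * of_real (cos (x * y)))
        = of_real ((- a * sqrt x) ^ l / fact l) * (of_real x powr (v - 1) * of_real (exp (- (e * x)))
          * of_real (cos (x * y)))"
      unfolding of_real_powr_plus_half[OF x] r of_real_mult by (simp add: mult_ac)
  qed
qed

lemma Icos_damped_coeff_sums: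
  assumes v: "Re v > 0" and a: "a > 0" and e: "e > 0"
  shows "Icos_damped_coeff v a y e sums Icos_damped v a y e"
proof -
  define K where "K = (\<lambda>x::real. of_real x powr (v - 1) * of_real (exp (- (e * x))) * of_real (cos (x * y)) :: complex)"
  define f where "f = (\<lambda>l x. of_real ((- a * sqrt x) ^ l / fact l) * K x)"
  define h where "h = (\<lambda>x. exp (a\<^sup>2 / (2 * e)) * (x powr (Re v - 1) * exp (- (e / 2 * x))))"
  have fi: "(f l has_integral Icos_damped_coeff v a y e l) {0<..}" for l
    unfolding f_def K_def by (rule has_integral_Icos_damped_term[OF v e])
  have hi: "h integrable_on {0<..}"
    unfolding h_def using v e by (intro integrable_on_mult_right powr_exp_integrable) auto
  have le: "norm (\<Sum>l<n. f l x) \<le> h x" if "x \<in> {0<..}" for n x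
  proof -
    have x: "x > 0" using that by simp
    have "norm (\<Sum>l<n. f l x) \<le> (\<Sum>l<n. norm (f l x))" by (rule norm_sum)
    also have "\<dots> = x powr (Re v - 1) * exp (- (e * x)) * \<bar>cos (x * y)\<bar> * (\<Sum>l<n. (a * sqrt x) ^ l / fact l)"
      unfolding sum_distrib_left
    proof (intro sum.cong refl)
      fix l
      have "\<bar>(- a * sqrt x) ^ l / fact l\<bar> = (a * sqrt x) ^ l / fact l"
        using a x by (simp add: power_abs abs_mult)
      thus "norm (f l x) = x powr (Re v - 1) * exp (- (e * x)) * \<bar>cos (x * y)\<bar> * ((a * sqrt x) ^ l / fact l)"
        using x unfolding f_def K_def norm_mult norm_of_real by (simp add: norm_powr_real_powr)
    qed
    also have "\<dots> \<le> x powr (Re v - 1) * exp (- (e * x)) * (\<Sum>l<n. (a * sqrt x) ^ l / fact l)"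
      using x a by (intro mult_right_mono mult_left_le abs_cos_le_one sum_nonneg) auto
    also have "\<dots> \<le> h x"
      unfolding h_def using a e x by (intro powr_exp_mult_exp_sqrt_sum_le) auto
    finally show ?thesis .
  qed
  have sums: "(\<lambda>l. f l x) sums (of_real x powr (v - 1) * of_real (exp (- a * sqrt x))
      * of_real (exp (- (e * x))) * of_real (cos (x * y)))" for x
  proof -
    have "(\<lambda>l. (- a * sqrt x) ^ l / fact l) sums exp (- a * sqrt x)"
      using exp_converges[of "- a * sqrt x"] by (simp add: divide_inverse_commute)
    hence "(\<lambda>l. of_real ((- a * sqrt x) ^ l / fact l) * K x) sums (of_real (exp (- a * sqrt x)) * K x)"
      by (intro sums_mult2) (simp only: sums_of_real_iff)
    thus ?thesis by (simp add: f_def K_def mult_ac)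
  qed
  show ?thesis
    unfolding Icos_damped_def by (rule sums_integral_dominated[OF fi hi le sums])
qed

section \<open>Removing the damping\<close>

lemma Icos_damped_tendsto_Icos:
  assumes v: "Re v > 0" and a: "a > 0"
  shows "(\<lambda>n. Icos_damped v a y (inverse (real (Suc n)))) \<longlonglongrightarrow> Icos v a y"
proof -
  define h where "h = (\<lambda>x::real. x powr (Re v - 1) * exp (- a * sqrt x))"
  define f where "f = (\<lambda>n x. of_real x powr (v - 1) * of_real (exp (- a * sqrt x))
      * of_real (exp (- (inverse (real (Suc n)) * x))) * of_real (cos (x * y)) :: complex)"
  have hi: "h integrable_on {0<..}"
    unfolding h_def using v a by (intro powr_exp_sqrt_integrable) auto
  have le: "norm (f n x) \<le> h x" if "x \<in> {0<..}" for n x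
  proof -
    have "norm (f n x) = h x * (exp (- (inverse (real (Suc n)) * x)) * \<bar>cos (x * y)\<bar>)"
      using that by (simp add: f_def h_def norm_mult norm_powr_real_powr)
    also have "\<dots> \<le> h x * 1"
      using that by (intro mult_left_mono mult_le_one abs_cos_le_one) (auto simp: h_def)
    finally show ?thesis by simp
  qed
  have fi: "f n integrable_on {0<..}" for n
    by (rule continuous_dominated_integrable(2)[OF _ _ hi le]) (auto simp: f_def intro!: continuous_intros)
  have "(\<lambda>n. f n x) \<longlonglongrightarrow> of_real x powr (v - 1) * of_real (exp (- a * sqrt x))
      * of_real (exp (- (0 * x))) * of_real (cos (x * y))" for x
    unfolding f_def by (intro tendsto_intros LIMSEQ_inverse_real_of_nat)
  hence "(\<lambda>n. integral {0<..} (f n)) \<longlonglongrightarrow> Icos v a y"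
    unfolding Icos_def by (intro dominated_convergence(2)[OF fi hi le]) auto
  thus ?thesis by (simp add: Icos_damped_def f_def)
qed

lemma norm_Gamma_mult_powr_le_integral:
  fixes s :: complex and y :: real
  assumes s: "Re s > 0" and y: "y > 0"
  shows "norm (Gamma s) * y powr (- Re s) \<le> integral {0<..} (\<lambda>x. x powr (Re s - 1) * exp (- (y * x)))"
proof -
  have "norm (Gamma s) * y powr (- Re s) = norm (laplace_powr s (of_real y))"
    using y by (simp add: laplace_powr_of_real[OF s y] norm_mult norm_powr_real_powr)
  also have "\<dots> \<le> integral {0<..} (\<lambda>x. x powr (Re s - 1) * exp (- (y * x)))"
    unfolding laplace_powr_def
  proof (rule integral_norm_bound_integral)
    show "(\<lambda>x. of_real x powr (s - 1) * exp (- (of_real y * of_real x))) integrable_on {0<..}"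
      using s y by (intro powr_exp_complex_integrable(2)) auto
    show "(\<lambda>x. x powr (Re s - 1) * exp (- (y * x))) integrable_on {0<..}"
      using s y by (intro powr_exp_integrable) auto
  qed (simp add: norm_mult norm_powr_real_powr)
  finally show ?thesis .
qed

lemma summable_Gamma_majorant:
  fixes v :: complex and a y :: real
  assumes v: "Re v > 0" and a: "a > 0" and y: "y > 0"
  shows "summable (\<lambda>l. a ^ l / fact l * (norm (Gamma (v + of_real (real l / 2))) * y powr (- Re v - real l / 2)))"
proof -
  \<comment> \<open>Each term is bounded by a Gamma integral; summed under the integral sign these
    reassemble \<open>exp(a\<surd>x)\<close>, which the factor \<open>exp(-yx)\<close> dominates.\<close>
  define g where "g = (\<lambda>l x. a ^ l / fact l * (x powr (Re v + real l / 2 - 1) * exp (- (y * x))))"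
  define h where "h = (\<lambda>x. exp (a\<^sup>2 / (2 * y)) * (x powr (Re v - 1) * exp (- (y / 2 * x))))"
  have gi: "g l integrable_on {0<..}" for l
    unfolding g_def using v y by (intro integrable_on_mult_right powr_exp_integrable) auto
  have bound: "a ^ l / fact l * (norm (Gamma (v + of_real (real l / 2))) * y powr (- Re v - real l / 2))
      \<le> integral {0<..} (g l)" for l
    unfolding g_def integral_mult_right
    using norm_Gamma_mult_powr_le_integral[of "v + of_real (real l / 2)" y] v y a
    by (intro mult_left_mono) (auto simp: algebra_simps)
  have "summable (\<lambda>l. integral {0<..} (g l))"
  proof (rule summableI_nonneg_bounded)
    show "0 \<le> integral {0<..} (g l)" for l
      using gi a by (intro integral_nonneg) (auto simp: g_def)
    fix n
    have "(\<Sum>l<n. integral {0<..} (g l)) = integral {0<..} (\<lambda>x. \<Sum>l<n. g l x)"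
      using gi by (simp add: integral_sum)
    also have "\<dots> \<le> integral {0<..} h"
    proof (rule integral_le)
      show "(\<lambda>x. \<Sum>l<n. g l x) integrable_on {0<..}" using gi by (intro integrable_sum) auto
      show "h integrable_on {0<..}"
        unfolding h_def using v y by (intro integrable_on_mult_right powr_exp_integrable) auto
      fix x :: real assume "x \<in> {0<..}"
      hence x: "x > 0" by simp
      have "(\<Sum>l<n. g l x) = x powr (Re v - 1) * exp (- (y * x)) * (\<Sum>l<n. (a * sqrt x) ^ l / fact l)"
        unfolding sum_distrib_left g_def using x
        by (intro sum.cong refl)
           (simp add: sqrt_power_eq_powr power_mult_distrib powr_add[symmetric] algebra_simps)
      also have "\<dots> \<le> h x"
        unfolding h_def using a y x by (intro powr_exp_mult_exp_sqrt_sum_le) auto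
      finally show "(\<Sum>l<n. g l x) \<le> h x" .
    qed
    finally show "(\<Sum>l<n. integral {0<..} (g l)) \<le> integral {0<..} h" .
  qed
  thus ?thesis
    by (rule summable_comparison_test'[where N = 0]) (use bound a in \<open>auto simp: abs_mult\<close>)
qed

lemma norm_powr_neg_le:
  fixes s z :: complex
  assumes s: "Re s \<ge> 0" and y: "y > 0" "y \<le> norm z"
  shows "norm (z powr (- s)) \<le> y powr (- Re s) * exp (\<bar>Im s\<bar> * pi)"
proof -
  have "norm (z powr (- s)) = norm z powr (- Re s) * exp (Im s * Arg z)"
    by (simp add: norm_powr_complex)
  also have "\<dots> \<le> y powr (- Re s) * exp (\<bar>Im s\<bar> * pi)"
  proof (intro mult_mono)
    show "norm z powr (- Re s) \<le> y powr (- Re s)" using s y by (intro powr_mono2') auto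
    have "Im s * Arg z \<le> \<bar>Im s\<bar> * \<bar>Arg z\<bar>" by (metis abs_ge_self abs_mult)
    also have "\<dots> \<le> \<bar>Im s\<bar> * pi" using Arg_bounded[of z] by (intro mult_left_mono) auto
    finally show "exp (Im s * Arg z) \<le> exp (\<bar>Im s\<bar> * pi)" by simp
  qed auto
  finally show ?thesis .
qed

lemma imaginary_powr_sum_eq_cos:
  fixes s :: complex and y :: real
  assumes y: "y > 0"
  shows "(- (\<i> * of_real y)) powr (- s) + (\<i> * of_real y) powr (- s) = 2 * of_real y powr (- s) * cos (s * of_real pi / 2)"
proof -
  define L where "L = complex_of_real (ln y)"
  have "Ln (of_real y) = L" using y by (simp add: L_def Ln_of_real)
  hence Ln_pos: "Ln (\<i> * of_real y) = L + \<i> * of_real pi / 2"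
    using Ln_times_ii[of "of_real y"] y by simp
  have Ln_neg: "Ln (- (\<i> * of_real y)) = L - \<i> * of_real pi / 2"
    using Ln_minus[of "\<i> * of_real y"] y Ln_pos by (simp add: algebra_simps)
  define B where "B = \<i> * (s * of_real pi / 2)"
  have "(- (\<i> * of_real y)) powr (- s) = exp (- s * (L - \<i> * of_real pi / 2))"
    using y by (simp add: powr_def Ln_neg)
  also have "- s * (L - \<i> * of_real pi / 2) = - s * L + B"
    by (simp add: B_def algebra_simps)
  finally have e1: "(- (\<i> * of_real y)) powr (- s) = exp (- s * L) * exp B"
    by (simp only: exp_add)
  have "(\<i> * of_real y) powr (- s) = exp (- s * (L + \<i> * of_real pi / 2))"
    using y by (simp add: powr_def Ln_pos)
  also have "- s * (L + \<i> * of_real pi / 2) = - s * L + - B"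
    by (simp add: B_def algebra_simps)
  finally have e2: "(\<i> * of_real y) powr (- s) = exp (- s * L) * exp (- B)"
    by (simp only: exp_add)
  have e3: "(of_real y :: complex) powr (- s) = exp (- s * L)"
    using y by (simp add: powr_def L_def Ln_of_real)
  have c: "cos (s * of_real pi / 2) = (exp B + exp (- B)) / 2"
    unfolding B_def by (rule cos_exp_eq)
  show ?thesis unfolding e1 e2 e3 c by (simp add: algebra_simps)
qed

definition Icos_coeff :: "complex \<Rightarrow> real \<Rightarrow> real \<Rightarrow> nat \<Rightarrow> complex" where
  "Icos_coeff v a y l = (-1) ^ l * of_real (a ^ l) * Gamma (v + of_real (real l / 2))
     / (of_real (y powr (real l / 2)) * fact l) * cos (v * of_real pi / 2 + of_real (real l * pi / 4))"

lemma Icos_damped_coeff_zero: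
  assumes y: "y > 0"
  shows "Icos_damped_coeff v a y 0 l = of_real y powr (- v) * Icos_coeff v a y l"
proof -
  define s where "s = v + of_real (real l / 2)"
  have "(of_real y :: complex) powr (- s) = of_real y powr (- v + of_real (- (real l / 2)))"
    by (simp add: s_def algebra_simps)
  also have "\<dots> = of_real y powr (- v) * of_real y powr (of_real (- (real l / 2)))"
    by (rule powr_add)
  also have "(of_real y :: complex) powr (of_real (- (real l / 2))) = of_real (y powr (- (real l / 2)))"
    using y by (intro powr_of_real) auto
  also have "y powr (- (real l / 2)) = inverse (y powr (real l / 2))"
    by (rule powr_minus)
  finally have y_powr: "(of_real y :: complex) powr (- s) = of_real y powr (- v) / of_real (y powr (real l / 2))"
    by (simp only: of_real_inverse divide_inverse)
  have "(of_real 0 - \<i> * of_real y) powr (- s) + (of_real 0 + \<i> * of_real y) powr (- s)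
      = 2 * of_real y powr (- s) * cos (s * of_real pi / 2)"
    using imaginary_powr_sum_eq_cos[OF y, of s] by simp
  hence "Icos_damped_coeff v a y 0 l = of_real ((- a) ^ l / fact l) * (Gamma s * (of_real y powr (- s) * cos (s * of_real pi / 2)))"
    unfolding Icos_damped_coeff_def s_def[symmetric] by simp
  also have "s * of_real pi / 2 = v * of_real pi / 2 + of_real (real l * pi / 4)"
    by (simp add: s_def algebra_simps)
  also have "complex_of_real ((- a) ^ l / fact l) = (-1) ^ l * of_real (a ^ l) / fact l"
    unfolding power_minus[of a l] of_real_divide of_real_mult of_real_power of_real_minus of_real_1 of_real_fact ..
  finally have "Icos_damped_coeff v a y 0 l = (-1) ^ l * of_real (a ^ l) / fact l * (Gamma s *
      (of_real y powr (- v) / of_real (y powr (real l / 2)) * cos (v * of_real pi / 2 + of_real (real l * pi / 4))))"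
    unfolding y_powr .
  moreover have "\<And>c f G Y P K :: complex. c / f * (G * (Y / P * K)) = Y * (c * G / (P * f) * K)"
    by (simp add: divide_inverse mult_ac)
  ultimately show ?thesis
    unfolding Icos_coeff_def s_def by metis
qed

lemma norm_Icos_damped_coeff_le:
  assumes v: "Re v > 0" and a: "a > 0" and y: "y > 0" and e: "e \<ge> 0"
  shows "norm (Icos_damped_coeff v a y e l)
    \<le> a ^ l / fact l * (norm (Gamma (v + of_real (real l / 2))) * y powr (- Re v - real l / 2)) * exp (\<bar>Im v\<bar> * pi)"
proof -
  define s where "s = v + of_real (real l / 2)"
  define Q where "Q = y powr (- Re v - real l / 2) * exp (\<bar>Im v\<bar> * pi)"
  have Q: "norm (z powr (- s)) \<le> Q" if "\<bar>Im z\<bar> = y" for z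
  proof -
    have Re: "Re s = Re v + real l / 2" and Im: "Im s = Im v" by (simp_all add: s_def)
    have "y \<le> norm z" using that abs_Im_le_cmod[of z] by linarith
    hence "norm (z powr (- s)) \<le> y powr (- Re s) * exp (\<bar>Im s\<bar> * pi)"
      using v y by (intro norm_powr_neg_le) (auto simp: Re)
    thus ?thesis unfolding Q_def Re Im by (simp add: algebra_simps)
  qed
  have "norm ((of_real e - \<i> * of_real y) powr (- s) + (of_real e + \<i> * of_real y) powr (- s)) \<le> Q + Q"
    using y by (intro norm_triangle_le add_mono Q) simp_all
  hence "norm (((of_real e - \<i> * of_real y) powr (- s) + (of_real e + \<i> * of_real y) powr (- s)) / 2) \<le> Q"
    by (simp add: norm_divide)
  hence "norm (Icos_damped_coeff v a y e l) \<le> \<bar>(- a) ^ l / fact l\<bar> * (norm (Gamma s) * Q)"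
    unfolding Icos_damped_coeff_def s_def[symmetric] norm_mult norm_of_real
    by (intro mult_left_mono) simp_all
  thus ?thesis using a by (simp add: Q_def s_def power_abs mult_ac)
qed

lemma Icos_eq_series:
  fixes v :: complex and a y :: real
  assumes v: "Re v > 0" and a: "a > 0" and y: "y > 0"
  shows "summable (\<lambda>l. norm (Icos_coeff v a y l))"
    and "Icos v a y = of_real y powr (- v) * (\<Sum>l. Icos_coeff v a y l)"
proof -
  define e :: "nat \<Rightarrow> real" where "e n = inverse (real (Suc n))" for n
  define M where "M l = a ^ l / fact l * (norm (Gamma (v + of_real (real l / 2))) * y powr (- Re v - real l / 2))
      * exp (\<bar>Im v\<bar> * pi)" for l
  define c where "c = (of_real y :: complex) powr (- v)"
  have c: "c \<noteq> 0" using y by (simp add: c_def)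
  have lim: "(\<lambda>n. Icos_damped_coeff v a y (e n) l) \<longlonglongrightarrow> Icos_damped_coeff v a y 0 l" for l
  proof -
    have "of_real 0 - \<i> * of_real y \<notin> \<real>\<^sub>\<le>\<^sub>0" "of_real 0 + \<i> * of_real y \<notin> \<real>\<^sub>\<le>\<^sub>0"
      using y by (auto simp: nonpos_Reals_def complex_eq_iff)
    thus ?thesis
      unfolding Icos_damped_coeff_def e_def by (intro tendsto_intros LIMSEQ_inverse_real_of_nat) auto
  qed
  have bound: "\<forall>\<^sub>F (l, n) in at_top \<times>\<^sub>F sequentially. norm (Icos_damped_coeff v a y (e n) l) \<le> M l"
    unfolding M_def e_def using norm_Icos_damped_coeff_le[OF v a y] by (intro always_eventually) auto
  have "summable M"
    unfolding M_def by (intro summable_mult2 summable_Gamma_majorant v a y)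
  from tannerys_theorem[OF lim bound this] have tannery: "summable (\<lambda>l. norm (Icos_damped_coeff v a y 0 l))"
      "(\<lambda>n. \<Sum>l. Icos_damped_coeff v a y (e n) l) \<longlonglongrightarrow> (\<Sum>l. Icos_damped_coeff v a y 0 l)"
    by auto
  have coeff_zero: "Icos_damped_coeff v a y 0 = (\<lambda>l. c * Icos_coeff v a y l)"
    using Icos_damped_coeff_zero[OF y] by (simp add: c_def fun_eq_iff)
  show sn: "summable (\<lambda>l. norm (Icos_coeff v a y l))"
    using tannery(1) c unfolding coeff_zero norm_mult by (simp add: summable_cmult_iff)
  have "(\<lambda>n. Icos_damped v a y (e n)) \<longlonglongrightarrow> (\<Sum>l. Icos_damped_coeff v a y 0 l)"
    using tannery(2) Icos_damped_coeff_sums[OF v a] by (simp add: e_def sums_iff)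
  hence "Icos v a y = (\<Sum>l. Icos_damped_coeff v a y 0 l)"
    using Icos_damped_tendsto_Icos[OF v a] LIMSEQ_unique by (auto simp: e_def)
  also have "\<dots> = c * (\<Sum>l. Icos_coeff v a y l)"
    unfolding coeff_zero using summable_norm_cancel[OF sn] by (rule suminf_mult)
  finally show "Icos v a y = of_real y powr (- v) * (\<Sum>l. Icos_coeff v a y l)"
    by (simp add: c_def)
qed

section \<open>Regrouping into hypergeometric series\<close>

lemma pochhammer_double_index:
  fixes u :: "'a::field_char_0"
  shows "pochhammer u (2 * n) = 4 ^ n * pochhammer (u / 2) n * pochhammer (u / 2 + 1 / 2) n"
  using pochhammer_double[of "u / 2" n] by (simp add: power_mult)

lemma pochhammer_quadruple_index:
  fixes w :: "'a::field_char_0"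
  shows "pochhammer w (4 * n) = 256 ^ n * pochhammer (w / 4) n * pochhammer (w / 4 + 1 / 4) n
           * pochhammer (w / 4 + 1 / 2) n * pochhammer (w / 4 + 3 / 4) n"
proof -
  have "pochhammer w (4 * n) = 4 ^ (2 * n) * pochhammer (w / 2) (2 * n) * pochhammer (w / 2 + 1 / 2) (2 * n)"
    using pochhammer_double_index[of w "2 * n"] by (simp add: mult.assoc[symmetric])
  also have "pochhammer (w / 2) (2 * n) = 4 ^ n * pochhammer (w / 4) n * pochhammer (w / 4 + 1 / 2) n"
    using pochhammer_double_index[of "w / 2" n] by simp
  also have "pochhammer (w / 2 + 1 / 2) (2 * n) = 4 ^ n * pochhammer (w / 4 + 1 / 4) n * pochhammer (w / 4 + 3 / 4) n"
    using pochhammer_double_index[of "w / 2 + 1 / 2" n] by (simp add: field_simps)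
  moreover have "(256::'a) ^ n = 4 ^ (2 * n) * 4 ^ n * 4 ^ n"
    by (simp add: power_mult flip: power_mult_distrib)
  ultimately show ?thesis by (simp add: mult_ac)
qed

lemma fact_four_mult_add:
  "(fact (4 * n + j) :: 'a::field_char_0) = fact j * 256 ^ n * pochhammer ((of_nat j + 1) / 4) n
     * pochhammer ((of_nat j + 2) / 4) n * pochhammer ((of_nat j + 3) / 4) n * pochhammer ((of_nat j + 4) / 4) n"
proof -
  have "(fact (4 * n + j) :: 'a) = pochhammer 1 (j + 4 * n)"
    by (simp add: pochhammer_fact add.commute)
  also have "\<dots> = fact j * pochhammer (1 + of_nat j) (4 * n)"
    by (simp add: pochhammer_product' pochhammer_fact)
  finally show ?thesis
    using pochhammer_quadruple_index[of "1 + of_nat j :: 'a" n]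
    by (simp add: add_divide_distrib add.commute mult_ac)
qed

lemma Gamma_add_even:
  assumes "s \<notin> \<int>\<^sub>\<le>\<^sub>0"
  shows "Gamma (s + of_nat (2 * n)) = Gamma s * 4 ^ n * pochhammer (s / 2) n * pochhammer (s / 2 + 1 / 2) n"
proof -
  have "Gamma s \<noteq> 0" using assms by (simp add: Gamma_eq_zero_iff)
  hence "Gamma (s + of_nat (2 * n)) = Gamma s * pochhammer s (2 * n)"
    using pochhammer_Gamma[OF assms, of "2 * n"] by (simp add: field_simps)
  thus ?thesis unfolding pochhammer_double_index by (simp add: mult_ac)
qed

lemma cos_add_of_nat_mult_pi:
  fixes x :: "'a::{real_normed_field, banach}"
  shows "cos (x + of_nat n * of_real pi) = (-1) ^ n * cos x"
  by (simp add: cos_add)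

lemma Icos_coeff_four_mult_add:
  fixes v :: complex and a y :: real and j n :: nat
  assumes v: "Re v > 0" and y: "y > 0"
  defines "\<sigma> \<equiv> v + of_real (real j / 2)"
  shows "Icos_coeff v a y (4 * n + j) = Icos_coeff v a y j *
     (pochhammer (\<sigma> / 2) n * pochhammer (\<sigma> / 2 + 1 / 2) n /
      (pochhammer ((of_nat j + 1) / 4) n * pochhammer ((of_nat j + 2) / 4) n
       * pochhammer ((of_nat j + 3) / 4) n * pochhammer ((of_nat j + 4) / 4) n)
      * of_real (- (a ^ 4 / (64 * y ^ 2))) ^ n)"
proof -
  have "Re \<sigma> > 0" using v by (simp add: \<sigma>_def)
  hence \<sigma>: "\<sigma> \<notin> \<int>\<^sub>\<le>\<^sub>0" by (auto elim!: nonpos_Ints_cases)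
  have "v + of_real (real (4 * n + j) / 2) = \<sigma> + of_nat (2 * n)"
    by (simp add: \<sigma>_def algebra_simps)
  hence Gamma: "Gamma (v + of_real (real (4 * n + j) / 2))
      = Gamma \<sigma> * 4 ^ n * pochhammer (\<sigma> / 2) n * pochhammer (\<sigma> / 2 + 1 / 2) n"
    using Gamma_add_even[OF \<sigma>] by simp_all
  have "y powr (real (4 * n + j) / 2) = y powr (real j / 2 + real (2 * n))"
    by (simp add: field_simps)
  also have "\<dots> = y powr (real j / 2) * y powr (real (2 * n))"
    by (rule powr_add)
  also have "y powr (real (2 * n)) = y ^ (2 * n)"
    using y by (rule powr_realpow)
  finally have y_powr: "complex_of_real (y powr (real (4 * n + j) / 2)) = of_real (y powr (real j / 2)) * of_real (y ^ 2) ^ n"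
    by (simp add: power_mult)
  have arg: "v * of_real pi / 2 + of_real (real (4 * n + j) * pi / 4)
      = (v * of_real pi / 2 + of_real (real j * pi / 4)) + of_nat n * of_real pi"
    by (simp add: algebra_simps)
  have cos: "cos (v * of_real pi / 2 + of_real (real (4 * n + j) * pi / 4))
      = (-1) ^ n * cos (v * of_real pi / 2 + of_real (real j * pi / 4))"
    unfolding arg by (rule cos_add_of_nat_mult_pi)
  have sign: "(-1::complex) ^ (4 * n + j) = (-1) ^ j"
    by (simp add: power_add power_mult)
  have a_pow: "complex_of_real (a ^ (4 * n + j)) = of_real (a ^ 4) ^ n * of_real (a ^ j)"
    by (simp add: power_add power_mult)
  have "complex_of_real (- (a ^ 4 / (64 * y ^ 2))) = - (of_real (a ^ 4) / (64 * of_real (y ^ 2)))"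
    by simp
  hence z: "complex_of_real (- (a ^ 4 / (64 * y ^ 2))) ^ n = (-1) ^ n * of_real (a ^ 4) ^ n / (64 ^ n * of_real (y ^ 2) ^ n)"
    by (simp only: power_minus[of "of_real (a ^ 4) / (64 * of_real (y ^ 2)) :: complex" n]
                   power_divide power_mult_distrib times_divide_eq_right)
  have "(256::complex) ^ n = 4 ^ n * 64 ^ n"
    by (simp add: power_mult_distrib[symmetric])
  hence regroup: "S * (A4 ^ n * Aj) * (G * 4 ^ n * P1 * P2) / ((Yj * Y2 ^ n) * (Fj * 256 ^ n * Q1 * Q2 * Q3 * Q4)) * ((-1) ^ n * C)
      = (S * Aj * G / (Yj * Fj) * C) * (P1 * P2 / (Q1 * Q2 * Q3 * Q4) * ((-1) ^ n * A4 ^ n / (64 ^ n * Y2 ^ n)))"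
    for S A4 Aj G P1 P2 Yj Y2 Fj Q1 Q2 Q3 Q4 C :: complex
    by (simp add: divide_inverse inverse_mult_distrib mult_ac)
  show ?thesis
    unfolding Icos_coeff_def Gamma y_powr cos sign a_pow z fact_four_mult_add[of n j] \<sigma>_def[symmetric] regroup ..
qed

lemma suminf_split_residue_classes:
  fixes T :: "nat \<Rightarrow> 'a::banach"
  assumes T: "summable (\<lambda>l. norm (T l))" and m: "m > 0"
  shows "\<And>j. summable (\<lambda>n. T (m * n + j))" and "suminf T = (\<Sum>j<m. \<Sum>n. T (m * n + j))"
proof -
  show sub: "summable (\<lambda>n. T (m * n + j))" for j
  proof -
    have "inj (\<lambda>n. m * n + j)" using m by (auto simp: inj_def)
    hence "summable (\<lambda>n. norm (T (m * n + j)))"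
      using summable_reindex[of "\<lambda>l. norm (T l)"] T by (simp add: o_def)
    thus ?thesis by (rule summable_norm_cancel)
  qed
  have "(\<lambda>n. \<Sum>i = n * m..<n * m + m. T i) sums suminf T"
    using summable_norm_cancel[OF T] m by (intro sums_group) (auto simp: summable_sums)
  moreover have "(\<Sum>i = n * m..<n * m + m. T i) = (\<Sum>j<m. T (m * n + j))" for n
    by (simp add: sum.atLeastLessThan_shift_0 atLeast0LessThan mult.commute)
  ultimately have "(\<lambda>n. \<Sum>j<m. T (m * n + j)) sums suminf T" by simp
  moreover have "(\<lambda>n. \<Sum>j<m. T (m * n + j)) sums (\<Sum>j<m. \<Sum>n. T (m * n + j))"
    using sub by (intro sums_sum summable_sums)
  ultimately show "suminf T = (\<Sum>j<m. \<Sum>n. T (m * n + j))" using sums_unique2 by blast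
qed

lemma suminf_mult_of_summable:
  fixes c :: "'a::real_normed_field"
  assumes "summable (\<lambda>n. c * h n)"
  shows "(\<Sum>n. c * h n) = c * suminf h"
proof (cases "c = 0")
  case False
  thus ?thesis using assms by (simp add: summable_cmult_iff suminf_mult)
qed simp

lemma suminf_Icos_coeff_residue:
  fixes v A B B1 B2 B3 :: complex and a y :: real and j :: nat
  assumes v: "Re v > 0" and y: "y > 0" and sm: "summable (\<lambda>n. Icos_coeff v a y (4 * n + j))"
    and A: "(v + of_real (real j / 2)) / 2 = A" and B: "A + 1 / 2 = B"
    and P: "\<And>n. pochhammer ((of_nat j + 1) / 4) n * pochhammer ((of_nat j + 2) / 4) n
              * pochhammer ((of_nat j + 3) / 4) n * pochhammer ((of_nat j + 4) / 4) n
            = pochhammer B1 n * pochhammer B2 n * pochhammer B3 n * fact n"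
  shows "(\<Sum>n. Icos_coeff v a y (4 * n + j))
    = Icos_coeff v a y j * hyp2F3 A B B1 B2 B3 (of_real (- (a ^ 4 / (64 * y ^ 2))))"
proof -
  have eq: "(\<lambda>n. Icos_coeff v a y (4 * n + j)) = (\<lambda>n. Icos_coeff v a y j * (pochhammer A n * pochhammer B n /
      (pochhammer B1 n * pochhammer B2 n * pochhammer B3 n * fact n) * of_real (- (a ^ 4 / (64 * y ^ 2))) ^ n))"
  proof
    fix n
    show "Icos_coeff v a y (4 * n + j) = Icos_coeff v a y j * (pochhammer A n * pochhammer B n /
      (pochhammer B1 n * pochhammer B2 n * pochhammer B3 n * fact n) * of_real (- (a ^ 4 / (64 * y ^ 2))) ^ n)"
      using Icos_coeff_four_mult_add[OF v y, where a = a and j = j and n = n] unfolding A B P .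
  qed
  show ?thesis
    unfolding eq hyp2F3_def by (rule suminf_mult_of_summable) (use sm eq in simp)
qed

lemma suminf_Icos_coeff_hyp2F3:
  fixes v :: complex and a y :: real and F :: "nat \<Rightarrow> complex \<Rightarrow> complex"
  assumes v: "Re v > 0" and a: "a > 0" and y: "y > 0"
    and F0: "F 0 = hyp2F3 (v / 2) ((v + 1) / 2) (1 / 4) (1 / 2) (3 / 4)"
    and F1: "F 1 = hyp2F3 ((2 * v + 1) / 4) ((2 * v + 3) / 4) (1 / 2) (3 / 4) (5 / 4)"
    and F2: "F 2 = hyp2F3 ((v + 1) / 2) ((v + 2) / 2) (3 / 4) (5 / 4) (3 / 2)"
    and F3: "F 3 = hyp2F3 ((2 * v + 3) / 4) ((2 * v + 5) / 4) (5 / 4) (3 / 2) (7 / 4)"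
  shows "(\<Sum>j\<le>3. Icos_coeff v a y j * F j (of_real (- (a ^ 4 / (64 * y ^ 2))))) = (\<Sum>l. Icos_coeff v a y l)"
proof -
  define z where "z = complex_of_real (- (a ^ 4 / (64 * y ^ 2)))"
  note residues = suminf_split_residue_classes[OF Icos_eq_series(1)[OF v a y], of 4]
  have "(\<Sum>n. Icos_coeff v a y (4 * n + 0)) = Icos_coeff v a y 0 * F 0 z"
    unfolding F0 z_def
    by (intro suminf_Icos_coeff_residue[OF v y] residues) (simp_all add: add_divide_distrib pochhammer_fact)
  moreover have "(\<Sum>n. Icos_coeff v a y (4 * n + 1)) = Icos_coeff v a y 1 * F 1 z"
    unfolding F1 z_def
    by (intro suminf_Icos_coeff_residue[OF v y] residues) (simp_all add: field_simps pochhammer_fact)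
  moreover have "(\<Sum>n. Icos_coeff v a y (4 * n + 2)) = Icos_coeff v a y 2 * F 2 z"
    unfolding F2 z_def
    by (intro suminf_Icos_coeff_residue[OF v y] residues) (simp_all add: field_simps pochhammer_fact)
  moreover have "(\<Sum>n. Icos_coeff v a y (4 * n + 3)) = Icos_coeff v a y 3 * F 3 z"
    unfolding F3 z_def
    by (intro suminf_Icos_coeff_residue[OF v y] residues) (simp_all add: field_simps pochhammer_fact)
  ultimately have "(\<Sum>l. Icos_coeff v a y l) = (\<Sum>j<4. Icos_coeff v a y j * F j z)"
    using residues(2) by (simp add: numeral_eq_Suc lessThan_Suc)
  also have "\<dots> = (\<Sum>j\<le>3. Icos_coeff v a y j * F j z)"
    by (simp add: numeral_eq_Suc lessThan_Suc atMost_Suc)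
  finally show ?thesis by (simp add: z_def)
qed

section \<open>The series over \<open>k\<close>\<close>

lemma norm_Icos_le:
  assumes v: "Re v > 0" and a0: "a0 > 0" and a: "a0 \<le> a"
  shows "norm (Icos v a y) \<le> integral {0<..} (\<lambda>x. x powr (Re v - 1) * exp (- a0 * sqrt x))"
proof -
  define f where "f = (\<lambda>x. of_real x powr (v - 1) * of_real (exp (- a * sqrt x)) * of_real (cos (x * y)) :: complex)"
  define h where "h = (\<lambda>x::real. x powr (Re v - 1) * exp (- a0 * sqrt x))"
  have hi: "h integrable_on {0<..}"
    unfolding h_def using v a0 by (intro powr_exp_sqrt_integrable) auto
  have le: "norm (f x) \<le> h x" if "x \<in> {0<..}" for x
  proof -
    have "norm (f x) = x powr (Re v - 1) * exp (- a * sqrt x) * \<bar>cos (x * y)\<bar>"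
      using that by (simp add: f_def norm_mult norm_powr_real_powr)
    also have "\<dots> \<le> h x * 1"
      unfolding h_def using that a by (intro mult_mono abs_cos_le_one) (auto intro!: mult_right_mono)
    finally show ?thesis by simp
  qed
  have "f integrable_on {0<..}"
    by (rule continuous_dominated_integrable(2)[OF _ _ hi le]) (auto simp: f_def intro!: continuous_intros)
  from integral_norm_bound_integral[OF this hi le] show ?thesis
    unfolding Icos_def f_def h_def .
qed

lemma summable_bounded_div_fact_mult:
  fixes \<Theta> g :: "nat \<Rightarrow> complex"
  assumes "Bseq \<Theta>" and g: "\<And>k. norm (g k) \<le> B"
  shows "summable (\<lambda>k. \<Theta> k / fact k * g k)"
proof -
  obtain K where K: "K > 0" "\<And>k. norm (\<Theta> k) \<le> K" using assms(1) by (auto elim: BseqE)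
  show ?thesis
  proof (rule summable_comparison_test'[where N = 0])
    show "summable (\<lambda>k. K * B * (inverse (fact k) * 1 ^ k))"
      by (intro summable_mult summable_exp)
    fix k :: nat
    have "norm (\<Theta> k / fact k * g k) = norm (\<Theta> k) * norm (g k) / fact k"
      by (simp add: norm_mult norm_divide)
    also have "\<dots> \<le> K * B / fact k"
      using K g[of k] by (intro divide_right_mono mult_mono) auto
    finally show "norm (\<Theta> k / fact k * g k) \<le> K * B * (inverse (fact k) * 1 ^ k)"
      by (simp add: divide_inverse)
  qed
qed

theorem mainTheorem2:
  fixes Theta :: "nat \<Rightarrow> complex" and v :: complex and b c lam y :: real
  assumes "Bseq Theta"
    and "Re v > 0" and "c > 0" and "y > 0" and "lam * b > 0"
  defines "IC \<equiv> (\<Sum>k. Theta k / fact k * Icos v (lam * b + c * real k) y)"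
  defines "F0 \<equiv> hyp2F3 (v/2) ((v + 1)/2) (1/4) (1/2) (3/4)"
  defines "F1 \<equiv> hyp2F3 ((2 * v+1)/4) ((2 * v+3)/4) (1/2) (3/4) (5/4)"
  defines "F2 \<equiv> hyp2F3 ((v + 1)/2) ((v + 2)/2) (3/4) (5/4) (3/2)"
  defines "F3 \<equiv> hyp2F3 ((2 * v+3)/4) ((2 * v+5)/4) (5/4) (3/2) (7/4)"
  defines "F \<equiv> (\<lambda>j::nat. if j = 0 then F0 else if j = 1 then F1 else if j = 2 then F2 else F3)"
  shows "summable (\<lambda>k. Theta k / fact k * Icos v (lam * b + c * real k) y)
    \<and> summable (\<lambda>k. Theta k / fact k *
         (\<Sum>l. (-1) ^ l * of_real ((lam * b + c * real k) ^ l) * Gamma (v + of_real (real l / 2))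
               / (of_real (y powr (real l / 2)) * fact l)
               * cos (v * of_real pi / 2 + of_real (real l * pi / 4))))
    \<and> IC = of_real y powr (- v) *
         (\<Sum>k. Theta k / fact k *
         (\<Sum>l. (-1) ^ l * of_real ((lam * b + c * real k) ^ l) * Gamma (v + of_real (real l / 2))
               / (of_real (y powr (real l / 2)) * fact l)
               * cos (v * of_real pi / 2 + of_real (real l * pi / 4))))
    \<and> summable (\<lambda>k. Theta k / fact k *
         (\<Sum>j\<le>3. (-1) ^ j * of_real ((lam * b + c * real k) ^ j) * Gamma (v + of_real (real j / 2))
               / (of_real (y powr (real j / 2)) * fact j)
               * cos (v * of_real pi / 2 + of_real (real j * pi / 4))
               * F j (of_real (- ((lam * b + c * real k) ^ 4 / (64 * y ^ 2))))))
    \<and> IC = of_real y powr (- v) *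
         (\<Sum>k. Theta k / fact k *
         (\<Sum>j\<le>3. (-1) ^ j * of_real ((lam * b + c * real k) ^ j) * Gamma (v + of_real (real j / 2))
               / (of_real (y powr (real j / 2)) * fact j)
               * cos (v * of_real pi / 2 + of_real (real j * pi / 4))
               * F j (of_real (- ((lam * b + c * real k) ^ 4 / (64 * y ^ 2))))))"
proof -
  note Theta = assms(1) and v = assms(2) and c = assms(3) and y = assms(4) and lb = assms(5)
  define A where "A k = lam * b + c * real k" for k
  define S where "S k = (\<Sum>l. Icos_coeff v (A k) y l)" for k
  have A: "lam * b \<le> A k" "A k > 0" for k
    using c lb by (auto simp: A_def intro: add_pos_nonneg)
  have Icos: "Icos v (A k) y = of_real y powr (- v) * S k" for k
    unfolding S_def using Icos_eq_series(2)[OF v A(2) y] .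
  have hyp: "(\<Sum>j\<le>3. Icos_coeff v (A k) y j * F j (of_real (- (A k ^ 4 / (64 * y ^ 2))))) = S k" for k
    unfolding S_def by (rule suminf_Icos_coeff_hyp2F3[OF v A(2) y]) (simp_all add: F_def F0_def F1_def F2_def F3_def)
  have terms: "(\<lambda>k. Theta k / fact k * Icos v (A k) y) = (\<lambda>k. of_real y powr (- v) * (Theta k / fact k * S k))"
    by (simp add: Icos fun_eq_iff mult_ac)
  have summable: "summable (\<lambda>k. Theta k / fact k * Icos v (A k) y)"
    using norm_Icos_le[OF v lb A(1)] by (intro summable_bounded_div_fact_mult[OF Theta])
  hence summable_S: "summable (\<lambda>k. Theta k / fact k * S k)"
    using y unfolding terms by (subst (asm) summable_cmult_iff) auto
  have "IC = of_real y powr (- v) * (\<Sum>k. Theta k / fact k * S k)"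
    unfolding IC_def A_def[symmetric] terms by (rule suminf_mult[OF summable_S])
  thus ?thesis
    using summable summable_S hyp unfolding S_def A_def Icos_coeff_def by simp
qed

end
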